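(* Let $G$ be a group, $A\le\operatorname{Aut}(G)$ with $|A|=n$, and $g\in G$. In the $n$-valued coset group $X=(G,A)$ let $z=\pi(g)$. Let $M\subseteq G$ be the submonoid generated by $\{a(g):a\in A\}$, and let $B^+(e,r)$ and $S^+(e,r)$ denote the set of elements of $M$ of word length at most $r$, respectively exactly $r$, with respect to the generators $\{a(g):a\in A\}$. Then for every $y\in X$ and every $r\ge 0$ the growth function $\xi_y(r)$ of the dynamic $T_z$ at $y$ satisfies $$\frac1n|S^+(e,r)|\le \xi_y(r)\le |B^+(e,r)|.$$
   Context: Coset group: for a group $G$ and finite $A\le\operatorname{Aut}(G)$ with $|A|=n$, $X=G/A$ is the set of $A$-orbits, $\pi:G\to X$ the projection, with $n$-valued multiplication $\pi(g)*\pi(h)=[\pi(g\,a(h)):a\in A]$ (an $n$-multi-set), extended to multi-sets elementwise with multiplicities; unit $\pi(e_G)$, inverse $\pi(g)\mapsto\pi(g^{-1})$. For $z\in X$, the dynamic $T_z:X\to\operatorname{Sym}^nX$ is $T_z(y)=y*z$, with iterates $T_z^0(y)=y$, $T_z^k(y)=T_z^{k-1}(y)*z$, so $T_z^r(y)=y*z*\dots*z$ ($r$ factors $z$). For a multi-set $N$, $\operatorname{Set}(N)$ is the set of distinct elements of $N$. The growth function is $\xi_y(r)=|\operatorname{Set}(T_z^r(y))|$. The word length in $M$ of $m$ is the minimal number of generators $a(g)$ whose product is $m$ (the identity has length $0$). *)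

theory Defs
  imports "HOL-Algebra.Algebra" "HOL-Library.Multiset"
begin

definition orb :: "('a \<Rightarrow> 'a) set \<Rightarrow> 'a \<Rightarrow> 'a set" where
  "orb A g = (\<lambda>a. a g) ` A"

definition coset_space :: "('a, 'm) monoid_scheme \<Rightarrow> ('a \<Rightarrow> 'a) set \<Rightarrow> 'a set set" where
  "coset_space G A = orb A ` carrier G"

text \<open>n-valued multiplication pi(g) * pi(h) = [pi(g a(h)) : a in A], computed on
  representatives (independent of the choice since A is a group of automorphisms).\<close>

definition cmul :: "('a, 'm) monoid_scheme \<Rightarrow> ('a \<Rightarrow> 'a) set \<Rightarrow> 'a set \<Rightarrow> 'a set \<Rightarrow> 'a set multiset" where
  "cmul G A x y =
     (let g = (SOME g. g \<in> carrier G \<and> orb A g = x);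
          h = (SOME h. h \<in> carrier G \<and> orb A h = y)
      in image_mset (\<lambda>a. orb A (g \<otimes>\<^bsub>G\<^esub> a h)) (mset_set A))"

definition cmul_mset :: "('a, 'm) monoid_scheme \<Rightarrow> ('a \<Rightarrow> 'a) set \<Rightarrow> 'a set multiset \<Rightarrow> 'a set \<Rightarrow> 'a set multiset" where
  "cmul_mset G A N z = sum_mset (image_mset (\<lambda>w. cmul G A w z) N)"

fun dyn_iter :: "('a, 'm) monoid_scheme \<Rightarrow> ('a \<Rightarrow> 'a) set \<Rightarrow> 'a set \<Rightarrow> nat \<Rightarrow> 'a set \<Rightarrow> 'a set multiset" where
  "dyn_iter G A z 0 y = {#y#}"
| "dyn_iter G A z (Suc k) y = cmul_mset G A (dyn_iter G A z k y) z"

definition growth :: "('a, 'm) monoid_scheme \<Rightarrow> ('a \<Rightarrow> 'a) set \<Rightarrow> 'a set \<Rightarrow> 'a set \<Rightarrow> nat \<Rightarrow> nat" where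
  "growth G A z y r = card (set_mset (dyn_iter G A z r y))"

definition word_prod :: "('a, 'm) monoid_scheme \<Rightarrow> 'a list \<Rightarrow> 'a" where
  "word_prod G ws = foldr (\<lambda>x y. x \<otimes>\<^bsub>G\<^esub> y) ws \<one>\<^bsub>G\<^esub>"

definition gen_monoid :: "('a, 'm) monoid_scheme \<Rightarrow> 'a set \<Rightarrow> 'a set" where
  "gen_monoid G S = {m. \<exists>ws. set ws \<subseteq> S \<and> word_prod G ws = m}"

definition word_length :: "('a, 'm) monoid_scheme \<Rightarrow> 'a set \<Rightarrow> 'a \<Rightarrow> nat" where
  "word_length G S m = (LEAST k. \<exists>ws. length ws = k \<and> set ws \<subseteq> S \<and> word_prod G ws = m)"

definition ball_plus :: "('a, 'm) monoid_scheme \<Rightarrow> 'a set \<Rightarrow> nat \<Rightarrow> 'a set" where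
  "ball_plus G S r = {m \<in> gen_monoid G S. word_length G S m \<le> r}"

definition sphere_plus :: "('a, 'm) monoid_scheme \<Rightarrow> 'a set \<Rightarrow> nat \<Rightarrow> 'a set" where
  "sphere_plus G S r = {m \<in> gen_monoid G S. word_length G S m = r}"

end

theory Submission
  imports Defs
begin

text \<open>Since the elements of A are automorphisms, the set underlying \<open>\<pi>(h) * \<pi>(g)\<close> is
  \<open>{\<pi>(h s) : s \<in> orb A g}\<close>, whatever representatives are used. By induction, the set underlying
  \<open>T\<^sub>z\<^sup>r(\<pi>(h))\<close> is the image under \<open>w \<mapsto> \<pi>(h w)\<close> of the set \<open>W\<^sub>r\<close> of products of exactly
  r generators \<open>a(g)\<close>, so \<open>\<xi>\<^sub>y(r) \<le> |W\<^sub>r| \<le> |B\<^sup>+(e,r)|\<close>. Conversely, left multiplication by h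
  is injective and every fibre of \<open>\<pi>\<close> is an A-orbit with at most n elements, so
  \<open>|S\<^sup>+(e,r)| \<le> |W\<^sub>r| \<le> n \<xi>\<^sub>y(r)\<close>.\<close>

definition word_products :: "('a, 'm) monoid_scheme \<Rightarrow> 'a set \<Rightarrow> nat \<Rightarrow> 'a set" where
  "word_products G S r = word_prod G ` {ws. length ws = r \<and> set ws \<subseteq> S}"

lemma (in monoid) word_prod_closed: "set ws \<subseteq> carrier G \<Longrightarrow> word_prod G ws \<in> carrier G"
  by (induction ws) (auto simp: word_prod_def)

lemma (in monoid) word_prod_snoc:
  assumes "set ws \<subseteq> carrier G" "s \<in> carrier G"
  shows "word_prod G (ws @ [s]) = word_prod G ws \<otimes> s"
  using assms by (induction ws) (auto simp: word_prod_def m_assoc word_prod_closed)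

lemma (in monoid) word_products_closed:
  "S \<subseteq> carrier G \<Longrightarrow> word_products G S r \<subseteq> carrier G"
  unfolding word_products_def using word_prod_closed by blast

lemma word_products_0: "word_products G S 0 = {\<one>\<^bsub>G\<^esub>}"
proof -
  have "{ws. length ws = 0 \<and> set ws \<subseteq> S} = {[]}" by auto
  then show ?thesis by (simp add: word_products_def word_prod_def)
qed

lemma (in monoid) word_products_Suc:
  assumes S: "S \<subseteq> carrier G"
  shows "word_products G S (Suc r) = (\<Union>w\<in>word_products G S r. (\<lambda>s. w \<otimes> s) ` S)"
proof (intro equalityI subsetI)
  fix x assume "x \<in> word_products G S (Suc r)"
  then obtain ws s where ws: "length ws = r" "set ws \<subseteq> S" "s \<in> S" "x = word_prod G (ws @ [s])"
    unfolding word_products_def by (auto simp: length_Suc_conv_rev)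
  moreover have "set ws \<subseteq> carrier G" "s \<in> carrier G" using ws S by auto
  ultimately have "x = word_prod G ws \<otimes> s" using word_prod_snoc by simp
  with ws show "x \<in> (\<Union>w\<in>word_products G S r. (\<lambda>s. w \<otimes> s) ` S)"
    unfolding word_products_def by blast
next
  fix x assume "x \<in> (\<Union>w\<in>word_products G S r. (\<lambda>s. w \<otimes> s) ` S)"
  then obtain ws s where ws: "length ws = r" "set ws \<subseteq> S" "s \<in> S" "x = word_prod G ws \<otimes> s"
    unfolding word_products_def by blast
  moreover have "set ws \<subseteq> carrier G" "s \<in> carrier G" using ws S by auto
  ultimately have "x = word_prod G (ws @ [s])" using word_prod_snoc by simp
  with ws show "x \<in> word_products G S (Suc r)"
    unfolding word_products_def by (intro image_eqI[of _ _ "ws @ [s]"]) auto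
qed

lemma finite_word_products: "finite S \<Longrightarrow> finite (word_products G S r)"
  unfolding word_products_def using finite_lists_length_eq[of S r]
  by (simp add: conj_commute)

lemma word_products_subset_ball_plus: "word_products G S r \<subseteq> ball_plus G S r"
  unfolding word_products_def ball_plus_def gen_monoid_def word_length_def
  by (auto intro: Least_le)

lemma mem_word_products_word_length:
  assumes "m \<in> gen_monoid G S"
  shows "m \<in> word_products G S (word_length G S m)"
proof -
  have "\<exists>k ws. length ws = k \<and> set ws \<subseteq> S \<and> word_prod G ws = m"
    using assms unfolding gen_monoid_def by blast
  then have "\<exists>ws. length ws = word_length G S m \<and> set ws \<subseteq> S \<and> word_prod G ws = m"
    unfolding word_length_def by (rule LeastI_ex)
  then show ?thesis unfolding word_products_def by blast
qed

lemma sphere_plus_subset_word_products: "sphere_plus G S r \<subseteq> word_products G S r"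
  unfolding sphere_plus_def by (auto dest: mem_word_products_word_length)

lemma finite_ball_plus:
  assumes "finite S"
  shows "finite (ball_plus G S r)"
proof (rule finite_subset)
  show "ball_plus G S r \<subseteq> (\<Union>k\<le>r. word_products G S k)"
    unfolding ball_plus_def by (auto dest: mem_word_products_word_length)
  show "finite (\<Union>k\<le>r. word_products G S k)"
    using assms by (simp add: finite_word_products)
qed

locale aut_subgroup = group +
  fixes A :: "('a \<Rightarrow> 'a) set"
  assumes subgroup_AutoGroup: "subgroup A (AutoGroup G)"
begin

lemma mem_auto: "a \<in> A \<Longrightarrow> a \<in> auto G"
  using subgroup.subset[OF subgroup_AutoGroup] by (auto simp: AutoGroup_def BijGroup_def)

lemma aut_mult: "\<lbrakk>a \<in> A; x \<in> carrier G; y \<in> carrier G\<rbrakk> \<Longrightarrow> a (x \<otimes> y) = a x \<otimes> a y"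
  using mem_auto by (auto simp: auto_def hom_def)

lemma aut_closed: "\<lbrakk>a \<in> A; x \<in> carrier G\<rbrakk> \<Longrightarrow> a x \<in> carrier G"
  using mem_auto by (auto simp: auto_def hom_def)

lemma AutoGroup_mult_eq: "\<lbrakk>a \<in> A; b \<in> A\<rbrakk> \<Longrightarrow> a \<otimes>\<^bsub>AutoGroup G\<^esub> b = compose (carrier G) a b"
  using mem_auto by (simp add: AutoGroup_def BijGroup_def auto_def)

lemma compose_closed: "\<lbrakk>a \<in> A; b \<in> A\<rbrakk> \<Longrightarrow> compose (carrier G) a b \<in> A"
  using subgroup.m_closed[OF subgroup_AutoGroup] AutoGroup_mult_eq by metis

lemma restrict_id_mem: "(\<lambda>x\<in>carrier G. x) \<in> A"
  using subgroup.one_closed[OF subgroup_AutoGroup] by (simp add: AutoGroup_def BijGroup_def)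

lemma aut_inverse:
  assumes "a \<in> A"
  obtains a' where "a' \<in> A" "\<And>x. x \<in> carrier G \<Longrightarrow> a' (a x) = x"
    "\<And>x. x \<in> carrier G \<Longrightarrow> a (a' x) = x"
proof
  interpret AG: group "AutoGroup G" by (rule AutoGroup)
  let ?a' = "inv\<^bsub>AutoGroup G\<^esub> a"
  have aC: "a \<in> carrier (AutoGroup G)" using subgroup.subset[OF subgroup_AutoGroup] assms by blast
  show a'A: "?a' \<in> A" using subgroup.m_inv_closed[OF subgroup_AutoGroup assms] .
  have l: "compose (carrier G) ?a' a = (\<lambda>x\<in>carrier G. x)"
    using AG.l_inv[OF aC] AutoGroup_mult_eq[OF a'A assms] by (simp add: AutoGroup_def BijGroup_def)
  show "?a' (a x) = x" if "x \<in> carrier G" for x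
    using fun_cong[OF l, of x] that by (simp add: compose_eq)
  have r: "compose (carrier G) a ?a' = (\<lambda>x\<in>carrier G. x)"
    using AG.r_inv[OF aC] AutoGroup_mult_eq[OF assms a'A] by (simp add: AutoGroup_def BijGroup_def)
  show "a (?a' x) = x" if "x \<in> carrier G" for x
    using fun_cong[OF r, of x] that by (simp add: compose_eq)
qed

lemma self_mem_orb: "x \<in> carrier G \<Longrightarrow> x \<in> orb A x"
  unfolding orb_def by (rule image_eqI[OF _ restrict_id_mem]) simp

lemma apply_mem_orb: "\<lbrakk>b \<in> A; a \<in> A; x \<in> carrier G\<rbrakk> \<Longrightarrow> b (a x) \<in> orb A x"
  unfolding orb_def by (rule image_eqI[of _ _ "compose (carrier G) b a"]) (auto simp: compose_eq compose_closed)

lemma orb_apply: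
  assumes a: "a \<in> A" and x: "x \<in> carrier G"
  shows "orb A (a x) = orb A x"
proof
  show "orb A (a x) \<subseteq> orb A x"
    using apply_mem_orb[OF _ a x] unfolding orb_def by blast
  obtain a' where "a' \<in> A" "a' (a x) = x"
    using aut_inverse[OF a] x by metis
  then show "orb A x \<subseteq> orb A (a x)"
    using apply_mem_orb[OF _ _ aut_closed[OF a x]] unfolding orb_def by force
qed

lemma image_orb:
  assumes d: "d \<in> A" and x: "x \<in> carrier G"
  shows "d ` orb A x = orb A x"
proof
  show "d ` orb A x \<subseteq> orb A x"
    using apply_mem_orb[OF d _ x] unfolding orb_def by blast
  obtain d' where d': "d' \<in> A" "\<And>y. y \<in> carrier G \<Longrightarrow> d (d' y) = y"
    using aut_inverse[OF d] by metis
  have "b x \<in> d ` orb A x" if "b \<in> A" for b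
    using d'(2)[OF aut_closed[OF that x]] apply_mem_orb[OF d'(1) that x] by (metis image_eqI)
  then show "orb A x \<subseteq> d ` orb A x" unfolding orb_def by blast
qed

lemma orb_subset_carrier: "x \<in> carrier G \<Longrightarrow> orb A x \<subseteq> carrier G"
  unfolding orb_def using aut_closed by blast

lemma some_representative_mem_orb:
  assumes "h \<in> carrier G"
  shows "(SOME k. k \<in> carrier G \<and> orb A k = orb A h) \<in> orb A h"
proof -
  have "\<exists>k. k \<in> carrier G \<and> orb A k = orb A h" using assms by blast
  then show ?thesis using self_mem_orb by (metis (mono_tags, lifting) someI_ex)
qed

lemma set_mset_cmul:
  assumes A: "finite A" and h: "h \<in> carrier G" and g: "g \<in> carrier G"
  shows "set_mset (cmul G A (orb A h) (orb A g)) = (\<lambda>s. orb A (h \<otimes> s)) ` orb A g"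
proof -
  obtain d c where d: "d \<in> A" "(SOME k. k \<in> carrier G \<and> orb A k = orb A h) = d h"
    and c: "c \<in> A" "(SOME k. k \<in> carrier G \<and> orb A k = orb A g) = c g"
    using some_representative_mem_orb[OF h] some_representative_mem_orb[OF g]
    unfolding orb_def by blast
  have "set_mset (cmul G A (orb A h) (orb A g)) = (\<lambda>t. orb A (d h \<otimes> t)) ` orb A (c g)"
    unfolding cmul_def Let_def d c using A by (simp add: orb_def image_image)
  also have "\<dots> = (\<lambda>t. orb A (d h \<otimes> t)) ` d ` orb A g"
    using c d g by (simp add: orb_apply image_orb)
  also have "\<dots> = (\<lambda>t. orb A (h \<otimes> t)) ` orb A g"
    unfolding image_image
  proof (rule image_cong[OF refl])
    fix t assume "t \<in> orb A g"
    then have "t \<in> carrier G" using orb_subset_carrier[OF g] by blast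
    then show "orb A (d h \<otimes> d t) = orb A (h \<otimes> t)"
      using d h by (simp add: aut_mult[symmetric] orb_apply)
  qed
  finally show ?thesis .
qed

lemma set_mset_dyn_iter:
  assumes A: "finite A" and h: "h \<in> carrier G" and g: "g \<in> carrier G"
  shows "set_mset (dyn_iter G A (orb A g) r (orb A h))
           = orb A ` (\<lambda>w. h \<otimes> w) ` word_products G (orb A g) r"
proof (induction r)
  case 0
  then show ?case using h by (simp add: word_products_0)
next
  case (Suc r)
  let ?W = "word_products G (orb A g) r"
  have W: "?W \<subseteq> carrier G" by (rule word_products_closed[OF orb_subset_carrier[OF g]])
  have "set_mset (dyn_iter G A (orb A g) (Suc r) (orb A h))
      = (\<Union>w\<in>?W. set_mset (cmul G A (orb A (h \<otimes> w)) (orb A g)))"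
    using Suc by (simp add: cmul_mset_def)
  also have "\<dots> = (\<Union>w\<in>?W. (\<lambda>s. orb A (h \<otimes> (w \<otimes> s))) ` orb A g)"
  proof (rule SUP_cong[OF refl])
    fix w assume "w \<in> ?W"
    then have w: "w \<in> carrier G" using W by blast
    have "set_mset (cmul G A (orb A (h \<otimes> w)) (orb A g)) = (\<lambda>s. orb A (h \<otimes> w \<otimes> s)) ` orb A g"
      using set_mset_cmul[OF A _ g] h w by simp
    also have "\<dots> = (\<lambda>s. orb A (h \<otimes> (w \<otimes> s))) ` orb A g"
      using h w orb_subset_carrier[OF g] by (intro image_cong) (auto simp: m_assoc)
    finally show "set_mset (cmul G A (orb A (h \<otimes> w)) (orb A g))
        = (\<lambda>s. orb A (h \<otimes> (w \<otimes> s))) ` orb A g" .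
  qed
  also have "\<dots> = orb A ` (\<lambda>w. h \<otimes> w) ` word_products G (orb A g) (Suc r)"
    by (simp add: word_products_Suc[OF orb_subset_carrier[OF g]] image_UN image_image)
  finally show ?case .
qed

lemma card_le_card_orb_image:
  assumes A: "finite A" and W: "finite W" "W \<subseteq> carrier G"
  shows "card W \<le> card (orb A ` W) * card A"
proof -
  define rep where "rep x = (SOME w. w \<in> W \<and> orb A w = x)" for x
  have "W \<subseteq> (\<lambda>(x, a). a (rep x)) ` (orb A ` W \<times> A)"
  proof
    fix w assume w: "w \<in> W"
    have "rep (orb A w) \<in> W \<and> orb A (rep (orb A w)) = orb A w"
      unfolding rep_def by (rule someI[of _ w]) (use w in simp)
    then have "w \<in> orb A (rep (orb A w))" using w W(2) self_mem_orb by auto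
    then obtain a where "a \<in> A" "w = a (rep (orb A w))" unfolding orb_def by blast
    with w show "w \<in> (\<lambda>(x, a). a (rep x)) ` (orb A ` W \<times> A)" by force
  qed
  then have "card W \<le> card ((\<lambda>(x, a). a (rep x)) ` (orb A ` W \<times> A))"
    using A W by (intro card_mono) auto
  also have "\<dots> \<le> card (orb A ` W \<times> A)" by (rule card_image_le) (use A W in simp)
  finally show ?thesis by (simp add: card_cartesian_product)
qed

lemma growth_eq_card:
  assumes "finite A" "h \<in> carrier G" "g \<in> carrier G"
  shows "growth G A (orb A g) (orb A h) r
           = card (orb A ` (\<lambda>w. h \<otimes> w) ` word_products G (orb A g) r)"
  unfolding growth_def using set_mset_dyn_iter[OF assms] by simp

lemma growth_le_card_ball_plus:
  assumes A: "finite A" and h: "h \<in> carrier G" and g: "g \<in> carrier G"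
  shows "growth G A (orb A g) (orb A h) r \<le> card (ball_plus G (orb A g) r)"
proof -
  let ?W = "word_products G (orb A g) r"
  have fin: "finite (orb A g)" using A by (simp add: orb_def)
  then have finW: "finite ?W" by (rule finite_word_products)
  have "growth G A (orb A g) (orb A h) r = card (orb A ` (\<lambda>w. h \<otimes> w) ` ?W)"
    by (rule growth_eq_card[OF A h g])
  also have "\<dots> \<le> card ((\<lambda>w. h \<otimes> w) ` ?W)" using finW by (intro card_image_le) simp
  also have "\<dots> \<le> card ?W" using finW by (rule card_image_le)
  also have "\<dots> \<le> card (ball_plus G (orb A g) r)"
    by (rule card_mono[OF finite_ball_plus[OF fin] word_products_subset_ball_plus])
  finally show ?thesis .
qed

lemma card_sphere_plus_le_growth:
  assumes A: "finite A" and h: "h \<in> carrier G" and g: "g \<in> carrier G"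
  shows "card (sphere_plus G (orb A g) r) \<le> growth G A (orb A g) (orb A h) r * card A"
proof -
  let ?W = "word_products G (orb A g) r"
  have finW: "finite ?W" using A by (simp add: orb_def finite_word_products)
  have W: "?W \<subseteq> carrier G" by (rule word_products_closed[OF orb_subset_carrier[OF g]])
  have "card (sphere_plus G (orb A g) r) \<le> card ?W"
    by (rule card_mono[OF finW sphere_plus_subset_word_products])
  also have "\<dots> = card ((\<lambda>w. h \<otimes> w) ` ?W)"
    using inj_on_subset[OF inj_on_cmult[OF h] W] by (simp add: card_image)
  also have "\<dots> \<le> card (orb A ` (\<lambda>w. h \<otimes> w) ` ?W) * card A"
    using A finW W h by (intro card_le_card_orb_image) auto
  also have "\<dots> = growth G A (orb A g) (orb A h) r * card A"
    by (simp add: growth_eq_card[OF A h g])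
  finally show ?thesis .
qed

end

theorem mainTheorem4:
  fixes G :: "('a, 'm) monoid_scheme" and A :: "('a \<Rightarrow> 'a) set" and n :: nat and g :: 'a
  assumes "group G"
    and "subgroup A (AutoGroup G)"
    and "finite A" and "card A = n"
    and "g \<in> carrier G"
    and "y \<in> coset_space G A"
  shows "real (card (sphere_plus G ((\<lambda>a. a g) ` A) r)) / real n
           \<le> real (growth G A (orb A g) y r)
       \<and> growth G A (orb A g) y r \<le> card (ball_plus G ((\<lambda>a. a g) ` A) r)"
proof -
  interpret aut_subgroup G A
    using assms(1,2) by (simp add: aut_subgroup_def aut_subgroup_axioms_def)
  obtain h where h: "h \<in> carrier G" "y = orb A h"
    using assms(6) unfolding coset_space_def by blast
  have generators: "(\<lambda>a. a g) ` A = orb A g" by (simp add: orb_def)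
  have "0 < n" using assms(3,4) restrict_id_mem card_gt_0_iff by blast
  moreover have "card (sphere_plus G (orb A g) r) \<le> growth G A (orb A g) y r * n"
    using card_sphere_plus_le_growth[OF assms(3) h(1) assms(5)] h(2) assms(4) by simp
  ultimately have "real (card (sphere_plus G (orb A g) r)) / real n \<le> real (growth G A (orb A g) y r)"
    by (simp add: divide_le_eq flip: of_nat_mult)
  moreover have "growth G A (orb A g) y r \<le> card (ball_plus G (orb A g) r)"
    using growth_le_card_ball_plus[OF assms(3) h(1) assms(5)] h(2) by simp
  ultimately show ?thesis unfolding generators by simp
qed

end
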